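(* Let $F$ be a field of characteristic $0$, $n\ge 1$, $i=\lfloor n/2\rfloor$, $j=\lfloor (n-1)/2\rfloor$. Let $f=p_{2a_1+1}\cdots p_{2a_{i+1}+1}$ be a long product, i.e. $a_1,\dots,a_{i+1}>j$. Suppose $f=\alpha_1g_1+\dots+\alpha_mg_m$ with $\alpha_\ell\in F$ and $g_1,\dots,g_m$ pairwise distinct proper products. Then every $g_\ell=p_1^{c_1}p_3^{c_3}\cdots p_{2j+1}^{c_{2j+1}}p_{2b_1+1}\cdots p_{2b_{i'}+1}$ with $\alpha_\ell\neq 0$ has at least one of $c_1,c_3,\dots,c_{2j+1}$ positive.
   Context: $p_k=x_1^k+\dots+x_n^k$. A proper product is a polynomial $p_1^{c_1}p_3^{c_3}\cdots p_{2j+1}^{c_{2j+1}}p_{2b_1+1}\cdots p_{2b_{i'}+1}$ with integers $c_1,\dots,c_{2j+1}\ge 0$, $0\le i'\le i$, and integers $b_k>j$ (a multiset); distinct means distinct exponent data. *)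

theory Defs
  imports "HOL-Library.Poly_Mapping" "HOL-Library.Multiset"
begin

(* Multivariate polynomials over 'a in variables x_0, x_1, ... are represented as
  finitely supported maps from monomials (exponent vectors nat =>0 nat) to coefficients,
  with the convolution product of HOL-Library.Poly_Mapping.*)

type_synonym 'a mpoly = "(nat \<Rightarrow>\<^sub>0 nat) \<Rightarrow>\<^sub>0 'a"

definition var_pow :: "nat \<Rightarrow> nat \<Rightarrow> 'a::comm_ring_1 mpoly" where
  "var_pow v k = Poly_Mapping.single (Poly_Mapping.single v k) 1"

definition power_sum :: "nat \<Rightarrow> nat \<Rightarrow> 'a::comm_ring_1 mpoly" where
  "power_sum n k = (\<Sum>v<n. var_pow v k)"

(* Exponent data of a proper product for parameters i, j:
  a list cs = [c_1, c_3, ..., c_{2j+1}] of length j+1 and a multiset B of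
  integers b > j with at most i elements.*)
definition proper_data :: "nat \<Rightarrow> nat \<Rightarrow> nat list \<times> nat multiset \<Rightarrow> bool" where
  "proper_data i j d \<longleftrightarrow> length (fst d) = Suc j \<and> (\<forall>b\<in>#snd d. j < b) \<and> size (snd d) \<le> i"

definition proper_prod :: "nat \<Rightarrow> nat list \<times> nat multiset \<Rightarrow> 'a::comm_ring_1 mpoly" where
  "proper_prod n d =
     (\<Prod>t<length (fst d). power_sum n (2*t+1) ^ (fst d ! t)) *
     (\<Prod>b\<in>#snd d. power_sum n (2*b+1))"

end

(*
  For l < i substitute x_2l := x_2l + x_(2l+1) z and x_(2l+1) := -x_2l, and 0 for the remaining
  variables (there are n >= 2i of them). An odd power sum p_m becomes divisible by z, with
  z-coefficient L_m = sum_(l<i) m x_2l^(m-1) x_(2l+1); so a product of k odd power sums becomes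
  z^k times a polynomial with constant term the product of the L_m.  In particular the long product,
  having i + 1 factors, vanishes modulo z^(i+1).

  Suppose some product with at most i factors has nonzero coefficient, and among those pick one,
  p_m1 ... p_mN, with the fewest factors. Compare coefficients of z^N: products with more factors
  contribute nothing, and among the products L_m of N factors only the one of p_m1 ... p_mN contains
  the monomial x_0^(m1-1) x_1 x_2^(m2-1) x_3 ... x_(2N-2)^(mN-1) x_(2N-1), with a positive integer
  coefficient.  Since the characteristic is 0, this is a contradiction.
*)

theory Submission
  imports Defs "HOL-Computational_Algebra.Polynomial" "HOL-Library.FuncSet"
begin

definition monomial_value :: "(nat \<Rightarrow> 'b::comm_ring_1) \<Rightarrow> (nat \<Rightarrow>\<^sub>0 nat) \<Rightarrow> 'b" where
  "monomial_value \<sigma> \<mu> = (\<Prod>v\<in>Poly_Mapping.keys \<mu>. \<sigma> v ^ Poly_Mapping.lookup \<mu> v)"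

definition mpoly_subst :: "(nat \<Rightarrow> 'a::comm_ring_1 mpoly poly) \<Rightarrow> 'a mpoly \<Rightarrow> 'a mpoly poly" where
  "mpoly_subst \<sigma> h =
     (\<Sum>\<mu>\<in>Poly_Mapping.keys h. [:Poly_Mapping.single 0 (Poly_Mapping.lookup h \<mu>):] * monomial_value \<sigma> \<mu>)"

lemma monomial_value_superset:
  assumes "finite A" "Poly_Mapping.keys \<mu> \<subseteq> A"
  shows "monomial_value \<sigma> \<mu> = (\<Prod>v\<in>A. \<sigma> v ^ Poly_Mapping.lookup \<mu> v)"
  unfolding monomial_value_def
  by (rule prod.mono_neutral_left) (use assms in \<open>auto simp: in_keys_iff\<close>)

lemma monomial_value_add: "monomial_value \<sigma> (\<mu> + \<nu>) = monomial_value \<sigma> \<mu> * monomial_value \<sigma> \<nu>"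
proof -
  let ?A = "Poly_Mapping.keys \<mu> \<union> Poly_Mapping.keys \<nu>"
  have "monomial_value \<sigma> (\<mu> + \<nu>) = (\<Prod>v\<in>?A. \<sigma> v ^ Poly_Mapping.lookup (\<mu> + \<nu>) v)"
    by (rule monomial_value_superset) (auto simp: keys_add)
  also have "\<dots> = (\<Prod>v\<in>?A. \<sigma> v ^ Poly_Mapping.lookup \<mu> v) * (\<Prod>v\<in>?A. \<sigma> v ^ Poly_Mapping.lookup \<nu> v)"
    by (simp add: lookup_add power_add prod.distrib)
  also have "\<dots> = monomial_value \<sigma> \<mu> * monomial_value \<sigma> \<nu>"
    by (subst (1 2) monomial_value_superset[of ?A]) auto
  finally show ?thesis .
qed

lemma monomial_value_zero [simp]: "monomial_value \<sigma> 0 = 1"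
  by (simp add: monomial_value_def)

lemma monomial_value_single [simp]: "monomial_value \<sigma> (Poly_Mapping.single v k) = \<sigma> v ^ k"
  by (simp add: monomial_value_def)

lemma mpoly_subst_superset:
  assumes "finite A" "Poly_Mapping.keys h \<subseteq> A"
  shows "mpoly_subst \<sigma> h =
    (\<Sum>\<mu>\<in>A. [:Poly_Mapping.single 0 (Poly_Mapping.lookup h \<mu>):] * monomial_value \<sigma> \<mu>)"
  unfolding mpoly_subst_def
  by (rule sum.mono_neutral_left) (use assms in \<open>auto simp: in_keys_iff\<close>)

lemma mpoly_subst_add: "mpoly_subst \<sigma> (h + g) = mpoly_subst \<sigma> h + mpoly_subst \<sigma> g"
proof -
  let ?A = "Poly_Mapping.keys h \<union> Poly_Mapping.keys g"
  have "mpoly_subst \<sigma> (h + g) =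
      (\<Sum>\<mu>\<in>?A. [:Poly_Mapping.single 0 (Poly_Mapping.lookup (h + g) \<mu>):] * monomial_value \<sigma> \<mu>)"
    by (rule mpoly_subst_superset) (auto simp: keys_add)
  also have "\<dots> = (\<Sum>\<mu>\<in>?A. [:Poly_Mapping.single 0 (Poly_Mapping.lookup h \<mu>):] * monomial_value \<sigma> \<mu>)
      + (\<Sum>\<mu>\<in>?A. [:Poly_Mapping.single 0 (Poly_Mapping.lookup g \<mu>):] * monomial_value \<sigma> \<mu>)"
    by (simp add: lookup_add single_add smult_add_left sum.distrib)
  also have "\<dots> = mpoly_subst \<sigma> h + mpoly_subst \<sigma> g"
    by (subst (1 2) mpoly_subst_superset[of ?A]) auto
  finally show ?thesis .
qed

lemma mpoly_subst_zero [simp]: "mpoly_subst \<sigma> 0 = 0"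
  by (simp add: mpoly_subst_def)

lemma mpoly_subst_sum: "mpoly_subst \<sigma> (\<Sum>x\<in>A. f x) = (\<Sum>x\<in>A. mpoly_subst \<sigma> (f x))"
  by (induction A rule: infinite_finite_induct) (auto simp: mpoly_subst_add)

lemma mpoly_subst_single:
  "mpoly_subst \<sigma> (Poly_Mapping.single \<mu> a) = [:Poly_Mapping.single 0 a:] * monomial_value \<sigma> \<mu>"
  by (cases "a = 0") (auto simp: mpoly_subst_def)

lemma poly_mapping_sum_single:
  "h = (\<Sum>\<mu>\<in>Poly_Mapping.keys h. Poly_Mapping.single \<mu> (Poly_Mapping.lookup h \<mu>))"
  by (rule poly_mapping_eqI)
     (auto simp: lookup_sum lookup_single when_def in_keys_iff sum.delta' split: if_splits)

lemma mpoly_subst_mult: "mpoly_subst \<sigma> (h * g) = mpoly_subst \<sigma> h * mpoly_subst \<sigma> g"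
proof -
  have const_mult: "[:Poly_Mapping.single 0 (a * b):] =
      [:Poly_Mapping.single 0 a:] * [:Poly_Mapping.single 0 (b::'a):]" for a b
    by (simp add: mult_single mult.commute)
  have "h * g = (\<Sum>\<mu>\<in>Poly_Mapping.keys h. \<Sum>\<nu>\<in>Poly_Mapping.keys g.
      Poly_Mapping.single (\<mu> + \<nu>) (Poly_Mapping.lookup h \<mu> * Poly_Mapping.lookup g \<nu>))"
    by (subst (1 2) poly_mapping_sum_single) (simp add: sum_product mult_single)
  then have "mpoly_subst \<sigma> (h * g) = (\<Sum>\<mu>\<in>Poly_Mapping.keys h. \<Sum>\<nu>\<in>Poly_Mapping.keys g.
      ([:Poly_Mapping.single 0 (Poly_Mapping.lookup h \<mu>):] * monomial_value \<sigma> \<mu>) *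
      ([:Poly_Mapping.single 0 (Poly_Mapping.lookup g \<nu>):] * monomial_value \<sigma> \<nu>))"
    by (simp add: mpoly_subst_sum mpoly_subst_single const_mult monomial_value_add mult_ac)
  also have "\<dots> = mpoly_subst \<sigma> h * mpoly_subst \<sigma> g"
    by (simp add: mpoly_subst_def sum_product)
  finally show ?thesis .
qed

lemma mpoly_subst_one [simp]: "mpoly_subst \<sigma> 1 = 1"
  using mpoly_subst_single[of \<sigma> 0 1] by simp

definition psum_prod :: "nat \<Rightarrow> nat multiset \<Rightarrow> 'a::comm_ring_1 mpoly" where
  "psum_prod n X = prod_mset (image_mset (power_sum n) X)"

definition cancelling_subst :: "nat \<Rightarrow> nat \<Rightarrow> 'a::comm_ring_1 mpoly poly" where
  "cancelling_subst i v =
     (if 2*i \<le> v then 0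
      else if even v then [:var_pow v 1, var_pow (v + 1) 1:] else [:- var_pow (v - 1) 1:])"

definition linear_monomial :: "nat \<Rightarrow> nat \<Rightarrow> (nat \<Rightarrow>\<^sub>0 nat)" where
  "linear_monomial l m = Poly_Mapping.single (2*l) (m - 1) + Poly_Mapping.single (2*l + 1) 1"

definition psum_linear_coeff :: "nat \<Rightarrow> nat \<Rightarrow> 'a::comm_ring_1 mpoly" where
  "psum_linear_coeff i m = (\<Sum>l<i. Poly_Mapping.single (linear_monomial l m) (of_nat m))"

lemma coeff_1_power:
  "coeff (p ^ m) 1 = of_nat m * coeff p 0 ^ (m - 1) * coeff (p::'b::comm_ring_1 poly) 1"
proof (induction m)
  case 0 then show ?case by simp
next
  case (Suc m)
  have "coeff (p ^ Suc m) 1 = coeff p 0 * coeff (p ^ m) 1 + coeff p 1 * coeff (p ^ m) 0"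
    by (simp add: coeff_mult numeral_2_eq_2 atMost_Suc)
  also have "\<dots> = of_nat (Suc m) * coeff p 0 ^ m * coeff p 1"
    using Suc by (cases m) (auto simp: coeff_0_power coeff_mult_0 algebra_simps)
  finally show ?case by simp
qed

lemma var_pow_power: "var_pow v 1 ^ k = (var_pow v k :: 'a::comm_ring_1 mpoly)"
  by (induction k) (simp_all add: var_pow_def mult_single single_add[symmetric])

lemma linear_monomial_term:
  "of_nat m * var_pow (2*l) (m - 1) * var_pow (2*l + 1) 1
    = (Poly_Mapping.single (linear_monomial l m) (of_nat m) :: 'a::comm_ring_1 mpoly)"
  by (simp add: var_pow_def linear_monomial_def mult_single flip: single_of_nat)

lemma mpoly_subst_power_sum: "mpoly_subst \<sigma> (power_sum n m) = (\<Sum>v<n. \<sigma> v ^ m)"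
  by (simp add: power_sum_def mpoly_subst_sum var_pow_def mpoly_subst_single)

lemma sum_lessThan_pairs:
  fixes g :: "nat \<Rightarrow> 'b::comm_monoid_add"
  assumes "2*i \<le> n" "\<And>v. 2*i \<le> v \<Longrightarrow> g v = 0"
  shows "(\<Sum>v<n. g v) = (\<Sum>l<i. g (2*l) + g (2*l + 1))"
proof -
  have "(\<Sum>v<n. g v) = (\<Sum>v<2*i. g v)"
    by (rule sum.mono_neutral_right) (use assms in auto)
  also have "\<dots> = (\<Sum>l<i. g (2*l) + g (2*l + 1))"
    by (induction i) (auto simp: add_ac)
  finally show ?thesis .
qed

lemma coeff_0_subst_power_sum:
  assumes "odd m" "2*i \<le> n"
  shows "coeff (mpoly_subst (cancelling_subst i) (power_sum n m) :: 'a::comm_ring_1 mpoly poly) 0 = 0"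
proof -
  have "coeff (mpoly_subst (cancelling_subst i) (power_sum n m) :: 'a mpoly poly) 0
      = (\<Sum>v<n. coeff (cancelling_subst i v) 0 ^ m)"
    by (simp add: mpoly_subst_power_sum coeff_sum coeff_0_power)
  also have "\<dots> = (\<Sum>l<i. coeff (cancelling_subst i (2*l)) 0 ^ m + coeff (cancelling_subst i (2*l + 1)) 0 ^ m)"
    by (rule sum_lessThan_pairs) (use assms in \<open>auto simp: cancelling_subst_def zero_power odd_pos\<close>)
  also have "\<dots> = 0"
    by (rule sum.neutral) (use assms in \<open>auto simp: cancelling_subst_def power_minus_odd\<close>)
  finally show ?thesis .
qed

lemma coeff_1_subst_power_sum:
  assumes "2*i \<le> n"
  shows "coeff (mpoly_subst (cancelling_subst i) (power_sum n m) :: 'a::comm_ring_1 mpoly poly) 1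
    = psum_linear_coeff i m"
proof -
  have "coeff (mpoly_subst (cancelling_subst i) (power_sum n m) :: 'a mpoly poly) 1
      = (\<Sum>v<n. of_nat m * coeff (cancelling_subst i v) 0 ^ (m - 1) * coeff (cancelling_subst i v) 1)"
    by (simp only: mpoly_subst_power_sum coeff_sum coeff_1_power)
  also have "\<dots> = (\<Sum>l<i. of_nat m * var_pow (2*l) 1 ^ (m - 1) * var_pow (2*l + 1) 1)"
    by (subst sum_lessThan_pairs) (use assms in \<open>auto simp: cancelling_subst_def\<close>)
  also have "\<dots> = psum_linear_coeff i m"
    by (simp only: var_pow_power psum_linear_coeff_def linear_monomial_term)
  finally show ?thesis .
qed

lemma mpoly_subst_psum_prod:
  assumes "\<forall>m\<in>#X. odd m" "2*i \<le> n"
  obtains Q where "mpoly_subst (cancelling_subst i) (psum_prod n X :: 'a::comm_ring_1 mpoly)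
      = monom 1 (size X) * Q"
    and "coeff Q 0 = prod_mset (image_mset (psum_linear_coeff i) X)"
  using assms(1)
proof (induction X arbitrary: thesis)
  case empty
  then show ?case by (simp add: psum_prod_def)
next
  case (add m X)
  then obtain Q where Q: "mpoly_subst (cancelling_subst i) (psum_prod n X :: 'a mpoly) = monom 1 (size X) * Q"
    "coeff Q 0 = prod_mset (image_mset (psum_linear_coeff i) X)" by auto
  obtain c R where cR: "mpoly_subst (cancelling_subst i) (power_sum n m :: 'a mpoly) = pCons c R"
    by (rule pCons_cases)
  have "c = 0" "coeff R 0 = psum_linear_coeff i m"
    using coeff_0_subst_power_sum[of m i n, where 'a='a] coeff_1_subst_power_sum[OF assms(2), of m, where 'a='a]
      add.prems assms(2) cR by simp_all
  moreover have "mpoly_subst (cancelling_subst i) (psum_prod n (add_mset m X) :: 'a mpoly)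
      = monom 1 (size (add_mset m X)) * (R * Q)"
  proof -
    have "psum_prod n (add_mset m X) = power_sum n m * (psum_prod n X :: 'a mpoly)"
      by (simp add: psum_prod_def)
    then show ?thesis
      using Q(1) cR \<open>c = 0\<close> by (simp add: mpoly_subst_mult monom_Suc monom_0 mult_monom mult_ac)
  qed
  ultimately show ?case using add.prems Q(2) by (simp add: coeff_mult_0)
qed

definition diagonal_monomial :: "nat list \<Rightarrow> (nat \<Rightarrow>\<^sub>0 nat)" where
  "diagonal_monomial w = (\<Sum>r<length w. linear_monomial r (w ! r))"

lemma prod_list_map_nth: "prod_list (map f xs) = (\<Prod>r<length xs. f (xs ! r))"
  by (induction xs) (simp_all add: prod.lessThan_Suc_shift del: prod.lessThan_Suc)

lemma prod_poly_mapping_single: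
  "finite A \<Longrightarrow> (\<Prod>x\<in>A. Poly_Mapping.single (k x) (c x))
     = Poly_Mapping.single (\<Sum>x\<in>A. k x) (\<Prod>x\<in>A. c x :: 'b::comm_semiring_1)"
  by (induction A rule: finite_induct) (auto simp: mult_single)

lemma lookup_prod_psum_linear_coeff:
  "Poly_Mapping.lookup (prod_list (map (psum_linear_coeff i) ms) :: 'a::comm_ring_1 mpoly) M
    = (\<Sum>f\<in>PiE {..<length ms} (\<lambda>_. {..<i}).
        ((\<Prod>r<length ms. of_nat (ms ! r)) when (\<Sum>r<length ms. linear_monomial (f r) (ms ! r)) = M))"
proof -
  have "prod_list (map (psum_linear_coeff i) ms) = (\<Prod>r<length ms. \<Sum>l<i.
      Poly_Mapping.single (linear_monomial l (ms ! r)) (of_nat (ms ! r) :: 'a))"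
    by (simp add: prod_list_map_nth psum_linear_coeff_def)
  also have "\<dots> = (\<Sum>f\<in>PiE {..<length ms} (\<lambda>_. {..<i}). \<Prod>r<length ms.
      Poly_Mapping.single (linear_monomial (f r) (ms ! r)) (of_nat (ms ! r) :: 'a))"
    by (rule prod_sum_PiE) auto
  also have "\<dots> = (\<Sum>f\<in>PiE {..<length ms} (\<lambda>_. {..<i}). Poly_Mapping.single
      (\<Sum>r<length ms. linear_monomial (f r) (ms ! r)) (\<Prod>r<length ms. of_nat (ms ! r) :: 'a))"
    by (simp add: prod_poly_mapping_single)
  finally show ?thesis
    by (simp add: lookup_sum lookup_single)
qed

lemma lookup_linear_monomial_odd:
  "Poly_Mapping.lookup (linear_monomial l' m) (2*l + 1) = (if l' = l then 1 else 0)"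
  by (auto simp: linear_monomial_def lookup_add lookup_single when_def)

lemma lookup_linear_monomial_even:
  "Poly_Mapping.lookup (linear_monomial l' m) (2*l) = (if l' = l then m - 1 else 0)"
  by (auto simp: linear_monomial_def lookup_add lookup_single when_def)

lemma mset_eq_if_nth_reindex:
  assumes "length ms = N" "length w = N" "inj_on f {..<N}" "f ` {..<N} = {..<N}"
    and "\<And>r. r < N \<Longrightarrow> ms ! r = w ! f r"
  shows "mset ms = mset w"
proof -
  have mset_nth: "mset xs = image_mset (nth xs) (mset_set {..<length xs})" for xs :: "'a list"
    using mset_set_upto_eq_mset_upto[of "length xs"] map_nth[of xs] mset_map by metis
  have "mset ms = image_mset (nth ms) (mset_set {..<N})"
    using assms(1) by (simp add: mset_nth)
  also have "\<dots> = image_mset (\<lambda>r. w ! f r) (mset_set {..<N})"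
    by (rule image_mset_cong) (simp add: assms(5))
  also have "\<dots> = image_mset (nth w) (image_mset f (mset_set {..<N}))"
    by (simp add: image_mset.compositionality comp_def)
  also have "\<dots> = mset w"
    using assms(2-4) by (simp add: image_mset_mset_set mset_nth)
  finally show ?thesis .
qed

text \<open>The odd coordinates of the monomial force \<open>f\<close> to be a permutation of \<open>{..<N}\<close>,
  and then the even coordinates give \<open>ms ! r = w ! f r\<close>.\<close>
lemma mset_eq_if_linear_monomials_eq:
  fixes ms w :: "nat list"
  assumes len: "length ms = N" "length w = N" and pos: "0 \<notin> set ms" "0 \<notin> set w"
    and eq: "(\<Sum>r<N. linear_monomial (f r) (ms ! r)) = diagonal_monomial w"
  shows "mset ms = mset w"
proof (rule mset_eq_if_nth_reindex[OF len])
  have card_fibre: "card {r\<in>{..<N}. f r = l} = (if l < N then 1 else 0)" for l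
  proof -
    have "Poly_Mapping.lookup (\<Sum>r<N. linear_monomial (f r) (ms ! r)) (2*l + 1) = card {r\<in>{..<N}. f r = l}"
      unfolding lookup_sum lookup_linear_monomial_odd by (simp flip: sum.inter_filter)
    moreover have "Poly_Mapping.lookup (diagonal_monomial w) (2*l + 1) = (if l < N then 1 else 0)"
      unfolding diagonal_monomial_def lookup_sum lookup_linear_monomial_odd using len by simp
    ultimately show ?thesis using eq by simp
  qed
  have into: "f r < N" if "r < N" for r
    using card_fibre[of "f r"] that by (auto split: if_splits)
  show inj: "inj_on f {..<N}"
  proof (rule inj_onI)
    fix r1 r2 assume r: "r1 \<in> {..<N}" "r2 \<in> {..<N}" "f r1 = f r2"
    have "card {r\<in>{..<N}. f r = f r1} = 1" using card_fibre[of "f r1"] into r by simp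
    then obtain z where z: "{r\<in>{..<N}. f r = f r1} = {z}" by (auto simp: card_Suc_eq)
    have "r1 \<in> {z}" "r2 \<in> {z}" using r by (auto simp flip: z)
    then show "r1 = r2" by simp
  qed
  show "f ` {..<N} = {..<N}"
    by (rule endo_inj_surj) (use into inj in auto)
  show "ms ! r0 = w ! f r0" if r0: "r0 < N" for r0
  proof -
    have "Poly_Mapping.lookup (\<Sum>r<N. linear_monomial (f r) (ms ! r)) (2 * f r0)
        = (\<Sum>r<N. if r = r0 then ms ! r - 1 else 0)"
      unfolding lookup_sum lookup_linear_monomial_even
      by (rule sum.cong) (use inj r0 in \<open>auto simp: inj_on_def\<close>)
    moreover have "Poly_Mapping.lookup (diagonal_monomial w) (2 * f r0) = w ! f r0 - 1"
      using into[OF r0] len unfolding diagonal_monomial_def lookup_sum lookup_linear_monomial_even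
      by simp
    moreover have "ms ! r0 \<noteq> 0"
      using pos(1) r0 len by (metis nth_mem)
    moreover have "w ! f r0 \<noteq> 0"
      using pos(2) into[OF r0] len by (metis nth_mem)
    ultimately show ?thesis using eq r0 by simp
  qed
qed

lemma mset_eq_if_lookup_diagonal_ne_zero:
  assumes "length ms = length w" "0 \<notin> set ms" "0 \<notin> set w"
    and "Poly_Mapping.lookup (prod_list (map (psum_linear_coeff i) ms) :: 'a::comm_ring_1 mpoly)
      (diagonal_monomial w) \<noteq> 0"
  shows "mset ms = mset w"
proof -
  obtain f where "((\<Prod>r<length ms. of_nat (ms ! r)) when
      (\<Sum>r<length ms. linear_monomial (f r) (ms ! r)) = diagonal_monomial w) \<noteq> (0::'a)"
    using assms(4) unfolding lookup_prod_psum_linear_coeff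
    by (rule sum.not_neutral_contains_not_neutral)
  then have "(\<Sum>r<length ms. linear_monomial (f r) (ms ! r)) = diagonal_monomial w"
    by (simp add: when_def split: if_splits)
  then show ?thesis
    by (rule mset_eq_if_linear_monomials_eq[OF refl assms(1)[symmetric] assms(2,3)])
qed

lemma of_nat_when: "of_nat (a when P) = (of_nat a when P)"
  by (simp add: when_def)

text \<open>The identity assignment \<open>f r = r\<close> is available since \<open>length w \<le> i\<close>, and all
  contributions are positive integers.\<close>
lemma lookup_diagonal_ne_zero:
  assumes "length w \<le> i" "0 \<notin> set w"
  shows "Poly_Mapping.lookup (prod_list (map (psum_linear_coeff i) w) :: 'a::{comm_ring_1,ring_char_0} mpoly)
    (diagonal_monomial w) \<noteq> 0"
proof -
  let ?P = "PiE {..<length w} (\<lambda>_. {..<i})"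
  let ?hit = "\<lambda>f. (\<Sum>r<length w. linear_monomial (f r) (w ! r)) = diagonal_monomial w"
  define c where "c = (\<Prod>r<length w. w ! r)"
  define total where "total = (\<Sum>f\<in>?P. c when ?hit f)"
  have "Poly_Mapping.lookup (prod_list (map (psum_linear_coeff i) w) :: 'a mpoly) (diagonal_monomial w)
      = of_nat total"
    unfolding lookup_prod_psum_linear_coeff total_def c_def
    by (simp only: of_nat_sum of_nat_prod of_nat_when)
  moreover have "c \<le> total"
  proof -
    define f0 where "f0 r = (if r < length w then r else undefined)" for r
    have "f0 \<in> ?P" using assms(1) by (auto simp: f0_def PiE_iff extensional_def)
    then have "(c when ?hit f0) \<le> total"
      unfolding total_def by (rule member_le_sum) (auto simp: finite_PiE)
    moreover have "?hit f0" by (simp add: f0_def diagonal_monomial_def)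
    ultimately show ?thesis by simp
  qed
  moreover have "0 < c"
  proof -
    have "0 < w ! r" if "r < length w" for r
      using assms(2) nth_mem[OF that] by (cases "w ! r") auto
    then show ?thesis unfolding c_def by (auto intro: prod_pos)
  qed
  ultimately show ?thesis by simp
qed

lemma prod_mset_image_mset_mset: "prod_mset (image_mset f (mset xs)) = prod_list (map f xs)"
  unfolding mset_map[symmetric] prod_mset_prod_list ..

lemma psum_prod_mset: "psum_prod n (mset ms) = prod_list (map (power_sum n) ms)"
  by (simp only: psum_prod_def prod_mset_image_mset_mset)

lemma coeff_subst_psum_prod_below:
  assumes "\<forall>m\<in>#X. odd m" "2*i \<le> n" "N < size X"
  shows "coeff (mpoly_subst (cancelling_subst i) (psum_prod n X :: 'a::comm_ring_1 mpoly)) N = 0"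
proof -
  obtain Q where "mpoly_subst (cancelling_subst i) (psum_prod n X :: 'a mpoly) = monom 1 (size X) * Q"
    by (rule mpoly_subst_psum_prod[OF assms(1,2)])
  then show ?thesis using assms(3) by (simp add: coeff_monom_mult)
qed

lemma coeff_subst_psum_prod_size:
  assumes "\<forall>m\<in>#X. odd m" "2*i \<le> n"
  shows "coeff (mpoly_subst (cancelling_subst i) (psum_prod n X :: 'a::comm_ring_1 mpoly)) (size X)
    = prod_mset (image_mset (psum_linear_coeff i) X)"
proof -
  obtain Q where "mpoly_subst (cancelling_subst i) (psum_prod n X :: 'a mpoly) = monom 1 (size X) * Q"
    and "coeff Q 0 = prod_mset (image_mset (psum_linear_coeff i) X)"
    by (rule mpoly_subst_psum_prod[OF assms(1,2)])
  then show ?thesis by (simp add: coeff_monom_mult)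
qed

lemma lookup_single_0_mult:
  "Poly_Mapping.lookup (Poly_Mapping.single 0 c * h) \<mu> = (c::'a::comm_ring_1) * Poly_Mapping.lookup h \<mu>"
  by (simp add: mult_map_scale_conv_mult[symmetric] map.rep_eq when_def)

definition diagonal_coeff :: "nat \<Rightarrow> nat list \<Rightarrow> 'a::comm_ring_1 mpoly \<Rightarrow> 'a" where
  "diagonal_coeff i w h =
     Poly_Mapping.lookup (coeff (mpoly_subst (cancelling_subst i) h) (length w)) (diagonal_monomial w)"

lemma diagonal_coeff_combination:
  "diagonal_coeff i w (\<Sum>X\<in>F. Poly_Mapping.single 0 (\<beta> X) * h X) = (\<Sum>X\<in>F. \<beta> X * diagonal_coeff i w (h X))"
  by (simp add: diagonal_coeff_def mpoly_subst_sum mpoly_subst_mult mpoly_subst_single coeff_sum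
      lookup_sum lookup_single_0_mult)

lemma diagonal_coeff_psum_prod_eq_0:
  assumes "\<forall>m\<in>#X. odd m" "2*i \<le> n" "0 \<notin> set w" "length w \<le> size X" "X \<noteq> mset w"
  shows "diagonal_coeff i w (psum_prod n X :: 'a::comm_ring_1 mpoly) = 0"
proof (cases "length w = size X")
  case True
  obtain ms where ms: "mset ms = X" using ex_mset by blast
  then have "length ms = length w" "0 \<notin> set ms" using True assms(1) by fastforce+
  then have "Poly_Mapping.lookup (prod_list (map (psum_linear_coeff i) ms) :: 'a mpoly)
      (diagonal_monomial w) = 0"
    using mset_eq_if_lookup_diagonal_ne_zero[of ms w i] assms(3,5) ms by blast
  then show ?thesis
    using coeff_subst_psum_prod_size[OF assms(1,2), where 'a='a] True
    unfolding ms[symmetric] by (simp add: diagonal_coeff_def prod_mset_image_mset_mset)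
next
  case False
  then show ?thesis
    using coeff_subst_psum_prod_below[OF assms(1,2), where 'a='a] assms(4)
    by (simp add: diagonal_coeff_def)
qed

lemma diagonal_coeff_psum_prod_ne_0:
  assumes "\<forall>m\<in>set w. odd m" "2*i \<le> n" "length w \<le> i"
  shows "diagonal_coeff i w (psum_prod n (mset w) :: 'a::{comm_ring_1,ring_char_0} mpoly) \<noteq> 0"
proof -
  have "0 \<notin> set w" using assms(1) by fastforce
  then show ?thesis
    using coeff_subst_psum_prod_size[of "mset w" i n, where 'a='a] lookup_diagonal_ne_zero[of w i]
      assms by (simp add: diagonal_coeff_def prod_mset_image_mset_mset)
qed

lemma psum_prod_combination_sizes:
  fixes \<beta> :: "nat multiset \<Rightarrow> 'a::field_char_0"
  assumes "2*i \<le> n" "finite F" and odd: "\<forall>X\<in>F. \<forall>m\<in>#X. odd m" "\<forall>m\<in>#Y. odd m"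
    and "i < size Y"
    and eq: "psum_prod n Y = (\<Sum>X\<in>F. Poly_Mapping.single 0 (\<beta> X) * psum_prod n X)"
    and "X0 \<in> F" "\<beta> X0 \<noteq> 0"
  shows "i < size X0"
proof (rule ccontr)
  assume short: "\<not> i < size X0"
  define A where "A = {X\<in>F. \<beta> X \<noteq> 0}"
  have "finite A" "X0 \<in> A" using assms by (simp_all add: A_def)
  then have "Min (size ` A) \<in> size ` A" by (intro Min_in) auto
  then obtain w where w: "mset w \<in> A" "length w = Min (size ` A)" by (metis ex_mset imageE size_mset)
  have min: "length w \<le> size X" if "X \<in> A" for X
    using \<open>finite A\<close> that w(2) by simp
  have "length w \<le> i" using min[OF \<open>X0 \<in> A\<close>] short by simp
  have odd_w: "\<forall>m\<in>set w. odd m" using odd w(1) by (auto simp: A_def)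
  then have "0 \<notin> set w" by fastforce
  have "length w < size Y" using \<open>length w \<le> i\<close> \<open>i < size Y\<close> by simp
  then have "0 = diagonal_coeff i w (psum_prod n Y :: 'a mpoly)"
    using diagonal_coeff_psum_prod_eq_0[OF odd(2) assms(1) \<open>0 \<notin> set w\<close>] by fastforce
  also have "\<dots> = (\<Sum>X\<in>F. \<beta> X * diagonal_coeff i w (psum_prod n X))"
    by (simp add: eq diagonal_coeff_combination)
  also have "\<dots> = (\<Sum>X\<in>F. if X = mset w then \<beta> (mset w) * diagonal_coeff i w (psum_prod n X) else 0)"
  proof (rule sum.cong)
    fix X assume "X \<in> F"
    then show "\<beta> X * diagonal_coeff i w (psum_prod n X) =
        (if X = mset w then \<beta> (mset w) * diagonal_coeff i w (psum_prod n X) else 0)"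
      using diagonal_coeff_psum_prod_eq_0[OF _ assms(1) \<open>0 \<notin> set w\<close>, of X] odd min[of X]
      by (auto simp: A_def)
  qed simp
  also have "\<dots> = \<beta> (mset w) * diagonal_coeff i w (psum_prod n (mset w))"
    using w(1) \<open>finite F\<close> by (simp add: A_def)
  finally show False
    using w(1) diagonal_coeff_psum_prod_ne_0[OF odd_w assms(1) \<open>length w \<le> i\<close>, where 'a='a]
    by (simp add: A_def)
qed

definition psum_indices :: "nat list \<times> nat multiset \<Rightarrow> nat multiset" where
  "psum_indices d =
     (\<Sum>t<length (fst d). replicate_mset (fst d ! t) (2*t + 1)) + image_mset (\<lambda>b. 2*b + 1) (snd d)"

lemma prod_power_eq_prod_mset:
  "(\<Prod>t<(L::nat). G (h t) ^ c t) = prod_mset (image_mset G (\<Sum>t<L. replicate_mset (c t) (h t)))"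
  by (induction L) (auto simp: image_mset_union image_replicate_mset prod_mset_replicate_mset)

lemma proper_prod_eq_psum_prod: "proper_prod n d = psum_prod n (psum_indices d)"
  unfolding proper_prod_def psum_prod_def psum_indices_def image_mset_union prod_mset.union
  by (subst prod_power_eq_prod_mset[of "power_sum n" "\<lambda>t. 2*t + 1", symmetric])
     (simp add: image_mset.compositionality comp_def)

lemma odd_psum_indices: "\<forall>m\<in>#psum_indices d. odd m"
proof -
  have "odd m" if "m \<in># (\<Sum>t<(L::nat). replicate_mset (c t) (2*t + 1))" for m L c
    using that by (induction L) (auto split: if_splits)
  then show ?thesis by (auto simp: psum_indices_def)
qed

lemma size_psum_indices:
  assumes "\<forall>t<length (fst d). fst d ! t = 0"
  shows "size (psum_indices d) = size (snd d)"
  using assms by (simp add: psum_indices_def)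

text \<open>The indices \<open>2t + 1\<close> with \<open>t \<le> j\<close> and \<open>2b + 1\<close> with \<open>b > j\<close> never collide, so the
  exponent data can be read off the multiset of indices.\<close>
lemma inj_on_psum_indices: "inj_on psum_indices {d. proper_data i j d}"
proof (rule inj_onI, clarsimp)
  fix cs B cs' B'
  assume d: "proper_data i j (cs, B)" "proper_data i j (cs', B')"
    and eq: "psum_indices (cs, B) = psum_indices (cs', B')"
  have len: "length cs = Suc j" "length cs' = Suc j" and big: "\<forall>b\<in>#B. j < b" "\<forall>b\<in>#B'. j < b"
    using d by (auto simp: proper_data_def)
  have count_low: "count (psum_indices (xs, X)) (2*t + 1) = xs ! t"
    if "length xs = Suc j" "\<forall>b\<in>#X. j < b" "t < Suc j" for xs X t
  proof -
    have "count (image_mset (\<lambda>b. 2*b + 1) X) (2*t + 1) = 0"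
      using that by (auto simp: count_image_mset' intro!: sum.neutral)
    then show ?thesis
      using that by (simp add: psum_indices_def count_sum sum.delta del: sum.lessThan_Suc)
  qed
  have "cs ! t = cs' ! t" if "t < Suc j" for t
    using count_low[OF len(1) big(1) that] count_low[OF len(2) big(2) that] eq by simp
  then have "cs = cs'" using len by (auto intro: nth_equalityI)
  then have "image_mset (\<lambda>b. 2*b + 1) B = image_mset (\<lambda>b. 2*b + 1) B'"
    using eq by (simp add: psum_indices_def)
  moreover have "inj (\<lambda>b::nat. 2*b + 1)" by (auto simp: inj_def)
  ultimately show "cs = cs' \<and> B = B'" using \<open>cs = cs'\<close> by (metis multiset.inj_map injD)
qed

theorem mainTheorem10:
  fixes n :: nat and a :: "nat list"
    and S :: "(nat list \<times> nat multiset) set"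
    and \<alpha> :: "nat list \<times> nat multiset \<Rightarrow> 'a::field_char_0"
  assumes "n \<ge> 1"
    and "length a = n div 2 + 1"
    and "\<forall>x\<in>set a. (n - 1) div 2 < x"
    and "finite S"
    and "\<forall>d\<in>S. proper_data (n div 2) ((n - 1) div 2) d"
    and "(\<Prod>x\<leftarrow>a. power_sum n (2*x+1) :: 'a mpoly) = (\<Sum>d\<in>S. Poly_Mapping.single 0 (\<alpha> d) * proper_prod n d)"
  shows "\<forall>d\<in>S. \<alpha> d \<noteq> 0 \<longrightarrow> (\<exists>t<length (fst d). 0 < fst d ! t)"
proof (intro ballI impI, rule ccontr)
  fix d0 assume "d0 \<in> S" "\<alpha> d0 \<noteq> 0" and pure: "\<not> (\<exists>t<length (fst d0). 0 < fst d0 ! t)"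
  have inj: "inj_on psum_indices S"
    by (rule inj_on_subset[OF inj_on_psum_indices]) (use assms(5) in auto)
  define \<beta> where "\<beta> X = \<alpha> (the_inv_into S psum_indices X)" for X
  have "(\<Sum>d\<in>S. Poly_Mapping.single 0 (\<alpha> d) * proper_prod n d) =
      (\<Sum>X\<in>psum_indices ` S. Poly_Mapping.single 0 (\<beta> X) * psum_prod n X :: 'a mpoly)"
    by (simp add: sum.reindex[OF inj] \<beta>_def the_inv_into_f_f[OF inj] proper_prod_eq_psum_prod)
  moreover have "(\<Prod>x\<leftarrow>a. power_sum n (2*x + 1) :: 'a mpoly) = psum_prod n (mset (map (\<lambda>x. 2*x + 1) a))"
    by (simp only: psum_prod_mset map_map comp_def)
  ultimately have long: "psum_prod n (mset (map (\<lambda>x. 2*x + 1) a)) =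
      (\<Sum>X\<in>psum_indices ` S. Poly_Mapping.single 0 (\<beta> X) * psum_prod n X :: 'a mpoly)"
    using assms(6) by simp
  have "n div 2 < size (psum_indices d0)"
  proof (rule psum_prod_combination_sizes[OF _ _ _ _ _ long])
    show "\<beta> (psum_indices d0) \<noteq> 0"
      using \<open>d0 \<in> S\<close> \<open>\<alpha> d0 \<noteq> 0\<close> by (simp add: \<beta>_def the_inv_into_f_f[OF inj])
  qed (use assms(2,4) \<open>d0 \<in> S\<close> odd_psum_indices in auto)
  moreover have "size (psum_indices d0) \<le> n div 2"
    using pure assms(5) \<open>d0 \<in> S\<close> by (simp add: size_psum_indices proper_data_def)
  ultimately show False by simp
qed

end
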